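(* Assume that at each bus either there is no generator or there are at least two generators ($n_i=0$ or $n_i\ge2$ for all $i$), and that the optimizer $x^*$ of the DC-OPF problem satisfies $x^*_n>0$ for all $n$. Then the inelastic electricity market game has a unique efficient Nash equilibrium $b^*$, given by $b^*_n=2a_nx^*_n+c_n$ for all $n$.
   Context: Network: a directed graph $\mathcal G=(\mathcal V,\mathcal E)$ with buses $\mathcal V=\{1,\dots,N_b\}$ and power lines $\mathcal E$; $\mathcal N_i^+=\{j:(i,j)\in\mathcal E\}$, $\mathcal N_i^-=\{j:(j,i)\in\mathcal E\}$. Each line $(i,j)$ carries flow $z_{ij}$ with limit $\bar z_{ij}>0$. There are $N$ generators; $G_i$ is the (possibly empty) set of generators at bus $i$, the $G_i$ partition $\{1,\dots,N\}$, $n_i=|G_i|$. Bus $i$ has load $y_i\ge0$. Generator $n$ has cost $f_n(x)=a_nx^2+c_nx$, $a_n>0$, $c_n\ge0$. DC-OPF: minimize $\sum_n f_n(x_n)$ s.t. $\sum_{j\in\mathcal N_i^+}z_{ij}-\sum_{j\in\mathcal N_i^-}z_{ji}=\sum_{n\in G_i}x_n-y_i$ for all $i$, $|z_{ij}|\le\bar z_{ij}$ for all $(i,j)\in\mathcal E$, $x\ge0$; assumed feasible with optimizer $(x^*,z^* )$, $x^*$ unique. S-DC-OPF given bids $b\ge0$: same constraints, objective $\sum_n b_nx_n$. Game: players are generators, actions bids $b_n\ge0$; given an optimizer $x^{\rm opt}(b)$ of S-DC-OPF chosen by the operator, payoff $u_n=b_nx^{\rm opt}_n(b)-f_n(x^{\rm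 opt}_n(b))$. Nash equilibrium: $b^*\ge0$ for which some optimizer $x^{\rm opt}(b^* )$ of S-DC-OPF$(b^* )$ satisfies, for all $n$, all $b_n\ge0$ and all optimizers $x^{\rm opt}(b_n,b^*_{-n})$ of S-DC-OPF$(b_n,b^*_{-n})$, $u_n(b_n,x^{\rm opt}_n(b_n,b^*_{-n}))\le u_n(b^*_n,x^{\rm opt}_n(b^* ))$. Efficient bid: $b^*\ge0$ such that $(x^*,z^* )$ optimizes S-DC-OPF$(b^* )$ and $x^*_n=\arg\max_{x\ge0}(b^*_nx-f_n(x))$ for all $n$. Efficient Nash equilibrium: an efficient bid that is a Nash equilibrium. *)

theory Defs
  imports Main "HOL.Real"
begin

text \<open>Buses are elements of a finite type 'b, generators elements of a finite type 'g.
  E is the set of directed lines, loc n is the bus of generator n (so G_i = {n. loc n = i},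
  which automatically partition the generators), y is the load, zbar the line limits,
  flows z are functions on pairs of buses (only values on E matter).\<close>

definition gens_at :: "('g \<Rightarrow> 'b) \<Rightarrow> 'b \<Rightarrow> 'g set" where
  "gens_at loc i = {n. loc n = i}"

definition feasible ::
  "('b \<times> 'b) set \<Rightarrow> ('g \<Rightarrow> 'b) \<Rightarrow> ('b \<Rightarrow> real) \<Rightarrow> ('b \<times> 'b \<Rightarrow> real)
   \<Rightarrow> ('g \<Rightarrow> real) \<Rightarrow> ('b \<times> 'b \<Rightarrow> real) \<Rightarrow> bool" where
  "feasible E loc y zbar x z \<longleftrightarrow>
     (\<forall>i. (\<Sum>j\<in>{j. (i, j) \<in> E}. z (i, j)) - (\<Sum>j\<in>{j. (j, i) \<in> E}. z (j, i))
          = (\<Sum>n\<in>gens_at loc i. x n) - y i)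
   \<and> (\<forall>e\<in>E. \<bar>z e\<bar> \<le> zbar e)
   \<and> (\<forall>n. 0 \<le> x n)"

definition gen_cost :: "('g \<Rightarrow> real) \<Rightarrow> ('g \<Rightarrow> real) \<Rightarrow> 'g \<Rightarrow> real \<Rightarrow> real" where
  "gen_cost a c n t = a n * t\<^sup>2 + c n * t"

definition dcopf_opt ::
  "('b \<times> 'b) set \<Rightarrow> ('g::finite \<Rightarrow> 'b) \<Rightarrow> ('b \<Rightarrow> real) \<Rightarrow> ('b \<times> 'b \<Rightarrow> real)
   \<Rightarrow> ('g \<Rightarrow> real) \<Rightarrow> ('g \<Rightarrow> real) \<Rightarrow> ('g \<Rightarrow> real) \<Rightarrow> ('b \<times> 'b \<Rightarrow> real) \<Rightarrow> bool" where
  "dcopf_opt E loc y zbar a c x z \<longleftrightarrow> feasible E loc y zbar x z \<and>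
     (\<forall>x' z'. feasible E loc y zbar x' z' \<longrightarrow>
        (\<Sum>n\<in>UNIV. gen_cost a c n (x n)) \<le> (\<Sum>n\<in>UNIV. gen_cost a c n (x' n)))"

definition sdcopf_opt ::
  "('b \<times> 'b) set \<Rightarrow> ('g::finite \<Rightarrow> 'b) \<Rightarrow> ('b \<Rightarrow> real) \<Rightarrow> ('b \<times> 'b \<Rightarrow> real)
   \<Rightarrow> ('g \<Rightarrow> real) \<Rightarrow> ('g \<Rightarrow> real) \<Rightarrow> ('b \<times> 'b \<Rightarrow> real) \<Rightarrow> bool" where
  "sdcopf_opt E loc y zbar b x z \<longleftrightarrow> feasible E loc y zbar x z \<and>
     (\<forall>x' z'. feasible E loc y zbar x' z' \<longrightarrow>
        (\<Sum>n\<in>UNIV. b n * x n) \<le> (\<Sum>n\<in>UNIV. b n * x' n))"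

definition payoff :: "('g \<Rightarrow> real) \<Rightarrow> ('g \<Rightarrow> real) \<Rightarrow> 'g \<Rightarrow> real \<Rightarrow> real \<Rightarrow> real" where
  "payoff a c n bn t = bn * t - gen_cost a c n t"

definition nash_eq ::
  "('b \<times> 'b) set \<Rightarrow> ('g::finite \<Rightarrow> 'b) \<Rightarrow> ('b \<Rightarrow> real) \<Rightarrow> ('b \<times> 'b \<Rightarrow> real)
   \<Rightarrow> ('g \<Rightarrow> real) \<Rightarrow> ('g \<Rightarrow> real) \<Rightarrow> ('g \<Rightarrow> real) \<Rightarrow> bool" where
  "nash_eq E loc y zbar a c b \<longleftrightarrow> (\<forall>n. 0 \<le> b n) \<and>
     (\<exists>xo zo. sdcopf_opt E loc y zbar b xo zo \<and>
        (\<forall>n bn x' z'. 0 \<le> bn \<longrightarrow> sdcopf_opt E loc y zbar (b(n := bn)) x' z' \<longrightarrow>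
            payoff a c n bn (x' n) \<le> payoff a c n (b n) (xo n)))"

definition efficient_bid ::
  "('b \<times> 'b) set \<Rightarrow> ('g::finite \<Rightarrow> 'b) \<Rightarrow> ('b \<Rightarrow> real) \<Rightarrow> ('b \<times> 'b \<Rightarrow> real)
   \<Rightarrow> ('g \<Rightarrow> real) \<Rightarrow> ('g \<Rightarrow> real) \<Rightarrow> ('g \<Rightarrow> real) \<Rightarrow> ('b \<times> 'b \<Rightarrow> real)
   \<Rightarrow> ('g \<Rightarrow> real) \<Rightarrow> bool" where
  "efficient_bid E loc y zbar a c xs zs b \<longleftrightarrow> (\<forall>n. 0 \<le> b n) \<and>
     sdcopf_opt E loc y zbar b xs zs \<and>
     (\<forall>n. 0 \<le> xs n \<and> (\<forall>t\<ge>0. b n * t - gen_cost a c n t \<le> b n * xs n - gen_cost a c n (xs n)))"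

end

theory Submission
  imports Defs
begin

text \<open>Efficiency pins every bid down: x*_n > 0 is an interior maximiser of b_n x - f_n(x), so
  b_n = f_n'(x*_n) = 2 a_n x*_n + c_n. Conversely, with these marginal-cost bids the linear
  objective is the directional derivative of the convex DC-OPF cost at x*, so (x*, z*) solves
  S-DC-OPF. Shifting output between two generators at the same bus keeps feasibility, so an
  S-DC-OPF optimiser never dispatches a generator whose bid exceeds that of a co-located one;
  hence co-located marginal-cost bids coincide. A generator raising its bid is then undercut by
  a co-located competitor and earns 0, and one lowering its bid earns at most what the
  marginal-cost bid earns on the same quantity, which is at most a_n x*_n^2, its equilibrium payoff.\<close>

lemma feasible_nonneg: "feasible E loc y zbar x z \<Longrightarrow> 0 \<le> x n"
  unfolding feasible_def by blast

lemma sdcopf_opt_feasible: "sdcopf_opt E loc y zbar b x z \<Longrightarrow> feasible E loc y zbar x z"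
  unfolding sdcopf_opt_def by blast

lemma feasible_convex_combination:
  assumes f1: "feasible E loc y zbar x z" and f2: "feasible E loc y zbar x' z'"
    and t: "0 \<le> t" "t \<le> 1"
  shows "feasible E loc y zbar (\<lambda>n. (1 - t) * x n + t * x' n) (\<lambda>e. (1 - t) * z e + t * z' e)"
  unfolding feasible_def
proof (intro conjI allI ballI)
  fix i
  let ?out = "\<lambda>z. \<Sum>j\<in>{j. (i, j) \<in> E}. z (i, j)" and ?inn = "\<lambda>z. \<Sum>j\<in>{j. (j, i) \<in> E}. z (j, i)"
    and ?gen = "\<lambda>x. \<Sum>n\<in>gens_at loc i. x n"
  have "?out z = ?gen x - y i + ?inn z" "?out z' = ?gen x' - y i + ?inn z'"
    using f1 f2 unfolding feasible_def by (simp_all add: algebra_simps)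
  moreover have "?out (\<lambda>e. (1 - t) * z e + t * z' e) = (1 - t) * ?out z + t * ?out z'"
    "?inn (\<lambda>e. (1 - t) * z e + t * z' e) = (1 - t) * ?inn z + t * ?inn z'"
    "?gen (\<lambda>n. (1 - t) * x n + t * x' n) = (1 - t) * ?gen x + t * ?gen x'"
    by (simp_all only: sum.distrib sum_distrib_left)
  ultimately show "?out (\<lambda>e. (1 - t) * z e + t * z' e) - ?inn (\<lambda>e. (1 - t) * z e + t * z' e)
      = ?gen (\<lambda>n. (1 - t) * x n + t * x' n) - y i"
    by (simp only:) (simp add: algebra_simps)
next
  fix e assume "e \<in> E"
  then have "\<bar>z e\<bar> \<le> zbar e" "\<bar>z' e\<bar> \<le> zbar e" using f1 f2 unfolding feasible_def by auto
  have "\<bar>(1 - t) * z e + t * z' e\<bar> \<le> (1 - t) * \<bar>z e\<bar> + t * \<bar>z' e\<bar>"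
    using abs_triangle_ineq[of "(1 - t) * z e" "t * z' e"] t by (simp add: abs_mult)
  also have "\<dots> \<le> (1 - t) * zbar e + t * zbar e"
    using \<open>\<bar>z e\<bar> \<le> zbar e\<close> \<open>\<bar>z' e\<bar> \<le> zbar e\<close> t by (intro add_mono mult_left_mono) auto
  finally show "\<bar>(1 - t) * z e + t * z' e\<bar> \<le> zbar e" by (simp add: algebra_simps)
next
  fix n
  show "0 \<le> (1 - t) * x n + t * x' n" using f1 f2 t unfolding feasible_def by simp
qed

definition move_output :: "('g \<Rightarrow> real) \<Rightarrow> 'g \<Rightarrow> 'g \<Rightarrow> real \<Rightarrow> 'g \<Rightarrow> real" where
  "move_output x n m d = (\<lambda>k. x k - (if k = n then d else 0) + (if k = m then d else 0))"

lemma feasible_move_output: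
  fixes x :: "'g::finite \<Rightarrow> real"
  assumes f: "feasible E loc y zbar x z" and "loc m = loc n" and "0 \<le> d" "d \<le> x n"
  shows "feasible E loc y zbar (move_output x n m d) z"
proof -
  have "(\<Sum>k\<in>gens_at loc i. move_output x n m d k) = (\<Sum>k\<in>gens_at loc i. x k)" for i
    using \<open>loc m = loc n\<close>
    by (simp add: move_output_def sum.distrib sum_subtractf gens_at_def)
  moreover have "0 \<le> move_output x n m d k" for k
    using f \<open>0 \<le> d\<close> \<open>d \<le> x n\<close> unfolding feasible_def move_output_def by auto
  ultimately show ?thesis using f unfolding feasible_def by simp
qed

lemma sum_weighted_move_output:
  fixes b x :: "'g::finite \<Rightarrow> real"
  shows "(\<Sum>k\<in>UNIV. b k * move_output x n m d k) = (\<Sum>k\<in>UNIV. b k * x k) - b n * d + b m * d"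
proof -
  have "(\<Sum>k\<in>UNIV. b k * move_output x n m d k)
      = (\<Sum>k\<in>UNIV. b k * x k - (if k = n then b n * d else 0) + (if k = m then b m * d else 0))"
    unfolding move_output_def by (rule sum.cong) (auto simp: algebra_simps)
  then show ?thesis by (simp add: sum.distrib sum_subtractf)
qed

lemma sdcopf_opt_bid_le_colocated:
  assumes so: "sdcopf_opt E loc y zbar b x z" and "loc m = loc n" and "0 < x n"
  shows "b n \<le> b m"
proof -
  have "feasible E loc y zbar x z" using sdcopf_opt_feasible[OF so] .
  then have "feasible E loc y zbar (move_output x n m (x n)) z"
    using feasible_move_output \<open>loc m = loc n\<close> less_imp_le[OF \<open>0 < x n\<close>] by blast
  then have "(\<Sum>k\<in>UNIV. b k * x k) \<le> (\<Sum>k\<in>UNIV. b k * move_output x n m (x n) k)"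
    using so unfolding sdcopf_opt_def by blast
  then have "0 \<le> (b m - b n) * x n" unfolding sum_weighted_move_output by (simp add: algebra_simps)
  then show ?thesis using \<open>0 < x n\<close> by (simp add: zero_le_mult_iff)
qed

lemma exists_colocated_generator:
  fixes loc :: "'g::finite \<Rightarrow> 'b"
  assumes "card (gens_at loc (loc n)) = 0 \<or> 2 \<le> card (gens_at loc (loc n))"
  obtains m where "m \<noteq> n" "loc m = loc n"
proof -
  have "n \<in> gens_at loc (loc n)" unfolding gens_at_def by simp
  then have "2 \<le> card (gens_at loc (loc n))" using assms by (auto simp: card_eq_0_iff)
  then have "\<not> gens_at loc (loc n) \<subseteq> {n}"
    using card_mono[of "{n}" "gens_at loc (loc n)"] by auto
  then show thesis using that unfolding gens_at_def by blast
qed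

lemma nonneg_if_nonneg_under_small_perturbation:
  fixes S Q r :: real
  assumes "0 < r" and perturbed: "\<And>t. 0 < t \<Longrightarrow> t \<le> r \<Longrightarrow> 0 \<le> S + t * Q"
  shows "0 \<le> S"
proof (rule ccontr)
  assume "\<not> 0 \<le> S"
  define t where "t = min r (- S / (\<bar>Q\<bar> + 1))"
  have "0 < t" "t \<le> r" unfolding t_def using \<open>0 < r\<close> \<open>\<not> 0 \<le> S\<close> by (auto simp: divide_neg_pos)
  have "t * Q \<le> t * \<bar>Q\<bar>" using \<open>0 < t\<close> by (simp add: mult_left_mono)
  also have "\<dots> \<le> (- S / (\<bar>Q\<bar> + 1)) * \<bar>Q\<bar>"
    using mult_right_mono[OF min.cobounded2 abs_ge_zero] unfolding t_def .
  also have "\<dots> < - S" using \<open>\<not> 0 \<le> S\<close> by (simp add: field_simps)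
  finally show False using perturbed[OF \<open>0 < t\<close> \<open>t \<le> r\<close>] by linarith
qed

lemma sdcopf_opt_marginal_cost_bids:
  fixes x :: "'g::finite \<Rightarrow> real"
  assumes opt: "dcopf_opt E loc y zbar a c x z"
  shows "sdcopf_opt E loc y zbar (\<lambda>n. 2 * a n * x n + c n) x z"
  unfolding sdcopf_opt_def
proof (intro conjI allI impI)
  show feas: "feasible E loc y zbar x z" using opt unfolding dcopf_opt_def by blast
  fix x' z' assume feas': "feasible E loc y zbar x' z'"
  define B where "B n = 2 * a n * x n + c n" for n
  define S where "S = (\<Sum>n\<in>UNIV. B n * (x' n - x n))"
  define Q where "Q = (\<Sum>n\<in>UNIV. a n * (x' n - x n)\<^sup>2)"
  have perturbed: "0 \<le> S + t * Q" if "0 < t" "t \<le> 1" for t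
  proof -
    have "feasible E loc y zbar (\<lambda>n. (1 - t) * x n + t * x' n) (\<lambda>e. (1 - t) * z e + t * z' e)"
      using feasible_convex_combination[OF feas feas'] that by simp
    then have "(\<Sum>n\<in>UNIV. gen_cost a c n (x n))
        \<le> (\<Sum>n\<in>UNIV. gen_cost a c n ((1 - t) * x n + t * x' n))"
      using opt unfolding dcopf_opt_def by blast
    moreover have "gen_cost a c n ((1 - t) * x n + t * x' n) - gen_cost a c n (x n)
        = t * (B n * (x' n - x n)) + t\<^sup>2 * (a n * (x' n - x n)\<^sup>2)" for n
      unfolding gen_cost_def B_def power2_eq_square by algebra
    then have "(\<Sum>n\<in>UNIV. gen_cost a c n ((1 - t) * x n + t * x' n))
        - (\<Sum>n\<in>UNIV. gen_cost a c n (x n)) = t * S + t\<^sup>2 * Q"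
      unfolding S_def Q_def sum_subtractf[symmetric] sum_distrib_left sum.distrib[symmetric] by simp
    ultimately have "0 \<le> t * S + t\<^sup>2 * Q" by linarith
    also have "t * S + t\<^sup>2 * Q = t * (S + t * Q)" unfolding power2_eq_square by algebra
    finally have "0 \<le> t * (S + t * Q)" .
    then show ?thesis using \<open>0 < t\<close> by (simp add: zero_le_mult_iff)
  qed
  have "0 \<le> S" using nonneg_if_nonneg_under_small_perturbation[OF zero_less_one perturbed] .
  then show "(\<Sum>n\<in>UNIV. (2 * a n * x n + c n) * x n) \<le> (\<Sum>n\<in>UNIV. (2 * a n * x n + c n) * x' n)"
    unfolding S_def B_def by (simp add: right_diff_distrib sum_subtractf)
qed

lemma interior_maximizer_quadratic:
  fixes A C X b :: real
  assumes "0 < X"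
    and max: "\<forall>t\<ge>0. b * t - (A * t\<^sup>2 + C * t) \<le> b * X - (A * X\<^sup>2 + C * X)"
  shows "b = 2 * A * X + C"
proof -
  define d where "d = b - C - 2 * A * X"
  have perturbed: "d * s \<le> A * s\<^sup>2" if "0 \<le> X + s" for s
    using max[rule_format, OF that] unfolding d_def by (simp add: power2_eq_square algebra_simps)
  have "0 \<le> - d + t * A" if "0 < t" for t
  proof -
    have "0 \<le> t * (- d + t * A)"
      using perturbed[of t] \<open>0 < X\<close> that by (simp add: power2_eq_square algebra_simps)
    then show ?thesis using \<open>0 < t\<close> by (simp add: zero_le_mult_iff)
  qed
  then have "0 \<le> - d" using nonneg_if_nonneg_under_small_perturbation[of 1 "- d" A] by simp
  moreover have "0 \<le> d + t * A" if "0 < t" "t \<le> X" for t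
  proof -
    have "0 \<le> t * (d + t * A)"
      using perturbed[of "- t"] that by (simp add: power2_eq_square algebra_simps)
    then show ?thesis using \<open>0 < t\<close> by (simp add: zero_le_mult_iff)
  qed
  then have "0 \<le> d" using nonneg_if_nonneg_under_small_perturbation[OF \<open>0 < X\<close>, of d A] by simp
  ultimately show ?thesis unfolding d_def by simp
qed

lemma payoff_marginal_cost_bid:
  "payoff a c n (2 * a n * X + c n) t = a n * X\<^sup>2 - a n * (t - X)\<^sup>2"
  unfolding payoff_def gen_cost_def power2_eq_square by algebra

lemma payoff_le_marginal_cost_payoff:
  assumes "0 \<le> a n"
  shows "payoff a c n (2 * a n * X + c n) t \<le> payoff a c n (2 * a n * X + c n) X"
  using assms unfolding payoff_marginal_cost_bid by simp

lemma efficient_bid_marginal_cost: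
  assumes opt: "dcopf_opt E loc y zbar a c x z"
    and a_nonneg: "\<forall>n. 0 \<le> a n" and c_nonneg: "\<forall>n. 0 \<le> c n" and x_nonneg: "\<forall>n. 0 \<le> x n"
  shows "efficient_bid E loc y zbar a c x z (\<lambda>n. 2 * a n * x n + c n)"
  unfolding efficient_bid_def
proof (intro conjI allI impI)
  fix n
  show "0 \<le> 2 * a n * x n + c n" "0 \<le> x n"
    using a_nonneg c_nonneg x_nonneg by simp_all
  fix t :: real
  show "(2 * a n * x n + c n) * t - gen_cost a c n t
      \<le> (2 * a n * x n + c n) * x n - gen_cost a c n (x n)"
    using payoff_le_marginal_cost_payoff[of a n c "x n" t] a_nonneg unfolding payoff_def by simp
qed (rule sdcopf_opt_marginal_cost_bids[OF opt])

lemma nash_eq_marginal_cost: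
  fixes loc :: "'g::finite \<Rightarrow> 'b"
  assumes opt: "dcopf_opt E loc y zbar a c x z"
    and a_nonneg: "\<forall>n. 0 \<le> a n" and c_nonneg: "\<forall>n. 0 \<le> c n" and x_pos: "\<forall>n. 0 < x n"
    and gens: "\<forall>i. card (gens_at loc i) = 0 \<or> 2 \<le> card (gens_at loc i)"
  shows "nash_eq E loc y zbar a c (\<lambda>n. 2 * a n * x n + c n)"
proof -
  define B where "B = (\<lambda>n. 2 * a n * x n + c n)"
  have so: "sdcopf_opt E loc y zbar B x z"
    unfolding B_def using sdcopf_opt_marginal_cost_bids[OF opt] .
  have deviation: "payoff a c n bn (x' n) \<le> payoff a c n (B n) (x n)"
    if "0 \<le> bn" and so': "sdcopf_opt E loc y zbar (B(n := bn)) x' z'" for n bn x' z'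
  proof (cases "bn \<le> B n")
    case True
    have "0 \<le> x' n" using feasible_nonneg[OF sdcopf_opt_feasible[OF so']] .
    then have "payoff a c n bn (x' n) \<le> payoff a c n (B n) (x' n)"
      unfolding payoff_def using True by (simp add: mult_right_mono)
    also have "\<dots> \<le> payoff a c n (B n) (x n)"
      unfolding B_def using payoff_le_marginal_cost_payoff[of a n] a_nonneg by blast
    finally show ?thesis .
  next
    case False
    obtain m where "m \<noteq> n" and colocated: "loc m = loc n"
      using exists_colocated_generator[of loc n, OF gens[rule_format]] by blast
    have "B m \<le> B n" using sdcopf_opt_bid_le_colocated[OF so colocated[symmetric]] x_pos by blast
    have "x' n = 0"
    proof (rule ccontr)
      assume "x' n \<noteq> 0"
      moreover have "0 \<le> x' n" using feasible_nonneg[OF sdcopf_opt_feasible[OF so']] .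
      ultimately have "0 < x' n" by simp
      then have "bn \<le> B m"
        using sdcopf_opt_bid_le_colocated[OF so' colocated] \<open>m \<noteq> n\<close> by simp
      then show False using False \<open>B m \<le> B n\<close> by simp
    qed
    have "0 \<le> a n * (x n)\<^sup>2" using a_nonneg by simp
    then show ?thesis
      unfolding B_def payoff_marginal_cost_bid \<open>x' n = 0\<close> by (simp add: payoff_def gen_cost_def)
  qed
  have "0 \<le> x n" for n using x_pos[rule_format, of n] by simp
  then have "\<forall>n. 0 \<le> B n" unfolding B_def using a_nonneg c_nonneg by simp
  then have "nash_eq E loc y zbar a c B"
    unfolding nash_eq_def using so deviation by blast
  then show ?thesis unfolding B_def .
qed

theorem corollary3p3:
  fixes E :: "('b::finite \<times> 'b) set" and loc :: "'g::finite \<Rightarrow> 'b"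
    and y :: "'b \<Rightarrow> real" and zbar :: "'b \<times> 'b \<Rightarrow> real"
    and a c :: "'g \<Rightarrow> real"
    and xs :: "'g \<Rightarrow> real" and zs :: "'b \<times> 'b \<Rightarrow> real"
  assumes zbar_pos: "\<forall>e\<in>E. 0 < zbar e"
    and y_nonneg: "\<forall>i. 0 \<le> y i"
    and a_pos: "\<forall>n. 0 < a n"
    and c_nonneg: "\<forall>n. 0 \<le> c n"
    and opt: "dcopf_opt E loc y zbar a c xs zs"
    and x_unique: "\<forall>x z. dcopf_opt E loc y zbar a c x z \<longrightarrow> x = xs"
    and gens: "\<forall>i. card (gens_at loc i) = 0 \<or> 2 \<le> card (gens_at loc i)"
    and xs_pos: "\<forall>n. 0 < xs n"
  shows "\<forall>b. (efficient_bid E loc y zbar a c xs zs b \<and> nash_eq E loc y zbar a c b)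
             \<longleftrightarrow> b = (\<lambda>n. 2 * a n * xs n + c n)"
proof (intro allI iffI)
  fix b assume "efficient_bid E loc y zbar a c xs zs b \<and> nash_eq E loc y zbar a c b"
  then have "\<forall>t\<ge>0. b n * t - gen_cost a c n t \<le> b n * xs n - gen_cost a c n (xs n)" for n
    unfolding efficient_bid_def by blast
  then show "b = (\<lambda>n. 2 * a n * xs n + c n)"
    using interior_maximizer_quadratic xs_pos unfolding gen_cost_def by (intro ext) blast
next
  fix b assume "b = (\<lambda>n. 2 * a n * xs n + c n)"
  moreover have "\<forall>n. 0 \<le> a n" "\<forall>n. 0 \<le> xs n" using a_pos xs_pos by (meson less_imp_le)+
  ultimately show "efficient_bid E loc y zbar a c xs zs b \<and> nash_eq E loc y zbar a c b"
    using efficient_bid_marginal_cost[OF opt _ c_nonneg] nash_eq_marginal_cost[OF opt _ c_nonneg xs_pos gens]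
    by simp
qed

end
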